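(* Consider stochastic gradient-push as in the setting below, with $\{\mathbb G(t)\}$ uniformly strongly connected by sub-sequences of length $L$ and stepsize $\alpha(t)=2/(\bar\lambda t)$, $t\ge1$, where $\bar\lambda=\frac1n\sum_{i=1}^n\lambda_i$. Then for all $t\ge1$, $$\mathbb E\Big[\Big\|\frac1n\sum_{i=1}^nx_i(t)-z^*\Big\|^2\Big]\le\frac{4CG^2}{\bar\lambda^2t},$$ where $C=4+\dfrac{128K_1K_2\bar\lambda}{G\eta\mu^2}+\dfrac{512n(K_2+1)}{\eta(1-\mu)\mu}$, $K_1=\mathbb E\big[\sum_{k=1}^n\|x_k(1)-\alpha(1)\tilde g_k(1)\|\big]$ and $K_2=\dfrac{-\mu^{-1/\ln\mu}}{\ln\mu}$.
   Context: Setting. Fix $n$ agents, $\mathcal V=\{1,\dots,n\}$. For each $t\in\{1,2,\dots\}$, $\mathbb G(t)=(\mathcal V,\mathcal E(t))$ is a directed graph containing a self-arc $(i,i)$ at every vertex; $\mathcal N_i(t)=\{j:(j,i)\in\mathcal E(t)\}$ and $\mathcal N_i^-(t)=\{k:(i,k)\in\mathcal E(t)\}$. Weights $w_{ij}(t)$ are positive for $j\in\mathcal N_i(t)$ and $w_{ij}(t)=0$ otherwise, and satisfy: there is $\beta>0$ with $w_{ij}(t)\ge\beta$ whenever $j\in\mathcal N_i(t)$, and $\sum_{j\in\mathcal N_i^-(t)}w_{ji}(t)=1$ for all $i,t$. Write $\Phi_W(t,\tau)=W(t-1)\cdots W(\tau)$, $W(t)=[w_{ij}(t)]$. Uniformly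 strongly connected by sub-sequences of length $L$: for every $t$ the graph with vertex set $\mathcal V$ and edge set $\bigcup_{k=t}^{t+L-1}\mathcal E(k)$ is strongly connected. Functions: each $f_i:\mathbb R^d\to\mathbb R$ is differentiable, $\lambda_i$-strongly convex ($f_i(x)-f_i(y)\ge\nabla f_i(y)^\top(x-y)+\frac{\lambda_i}2\|x-y\|^2$) and $\gamma_i$-smooth ($\|\nabla f_i(x)-\nabla f_i(y)\|\le\gamma_i\|x-y\|$); $f=\frac1n\sum_if_i$ with unique minimizer $z^*$. Stochastic gradient-push (started at $t=1$): $x_i(t+1)=\sum_{j\in\mathcal N_i(t)}w_{ij}(t)[x_j(t)-\alpha(t)\tilde g_j(t)]$, $x_i(1)\in\mathbb R^d$; $y_i(t+1)=\sum_{j\in\mathcal N_i(t)}w_{ij}(t)y_j(t)$, $y_i(1)=1$; $z_i(t)=x_i(t)/y_i(t)$; $\tilde g_i(t)=\nabla f_i(z_i(t))+N_i(z_i(t))$ where the noise has zero mean conditionally on the past $\mathcal F(t)=\{x_i(s),y_i(s),\tilde g_i(s):i\in\mathcal V,s<t\}\cup\{x_i(t),y_i(t)\}$, is independent across agents/time, and satisfies $\|N_i(x)\|\le c_i$ a.s. for constants $c_i$. Constants: $G>0$ is a constant such that, almost surely for all $i$ and $t$, $\mathbb E[\|\tilde g_i(t)\|^2]\le G^2$, $\|\nabla f_i(z_i(t))\|\le G$ and $\|\nabla f_i(\frac1n\sum_k x_k(t))\|\le G$ (such $G$ exists under these assumptions). $\eta>0$ is any constant with $y_i(t)\ge\eta$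 for all $i,t$ (e.g. $\eta=n^{-nL}$); $\mu\in(0,1)$ is any constant for which there exist stochastic vectors $\phi(t)$ with $|[\Phi_W(t+1,s)]_{ij}-\phi_i(t)|\le4\mu^{t-s}$ for all $i,j$ and $t\ge s$ (e.g. $\mu=(1-n^{-nL})^{1/L}$). *)

theory Defs
  imports "HOL-Probability.Probability"
begin

text \<open>Square matrices of size n are represented as functions nat => nat => real,
  indices ranging over {..<n}.\<close>

definition mat_mul :: "nat \<Rightarrow> (nat \<Rightarrow> nat \<Rightarrow> real) \<Rightarrow> (nat \<Rightarrow> nat \<Rightarrow> real) \<Rightarrow> nat \<Rightarrow> nat \<Rightarrow> real" where
  "mat_mul n A B = (\<lambda>i j. \<Sum>k<n. A i k * B k j)"

definition id_mat :: "nat \<Rightarrow> nat \<Rightarrow> real" where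
  "id_mat = (\<lambda>i j. if i = j then 1 else 0)"

fun PhiW :: "nat \<Rightarrow> (nat \<Rightarrow> nat \<Rightarrow> nat \<Rightarrow> real) \<Rightarrow> nat \<Rightarrow> nat \<Rightarrow> nat \<Rightarrow> nat \<Rightarrow> real" where
  "PhiW n W t tau = (if t \<le> tau then id_mat else mat_mul n (W (t - 1)) (PhiW n W (t - 1) tau))"

definition stoch_vec :: "nat \<Rightarrow> (nat \<Rightarrow> real) \<Rightarrow> bool" where
  "stoch_vec n v \<longleftrightarrow> (\<forall>i<n. 0 \<le> v i) \<and> (\<Sum>i<n. v i) = 1"

definition gen_events :: "'a measure \<Rightarrow> ('a \<Rightarrow> 'b::topological_space) set \<Rightarrow> 'a set set" where
  "gen_events M Xs = sigma_sets (space M) (\<Union>X\<in>Xs. {X -` B \<inter> space M | B. B \<in> sets borel})"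

text \<open>The history F(t): x_i(s), tilde g_i(s) for s < t (s >= 1) and x_i(t).
  (The y_i are deterministic and hence add nothing.)\<close>
definition hist :: "'a measure \<Rightarrow> nat \<Rightarrow> (nat \<Rightarrow> nat \<Rightarrow> 'a \<Rightarrow> 'v::topological_space)
   \<Rightarrow> (nat \<Rightarrow> nat \<Rightarrow> 'a \<Rightarrow> 'v) \<Rightarrow> nat \<Rightarrow> 'a set set" where
  "hist M n x g t = gen_events M
     ({x i s | i s. i < n \<and> 1 \<le> s \<and> s \<le> t} \<union> {g i s | i s. i < n \<and> 1 \<le> s \<and> s < t})"

end

theory Submission
  imports Defs
begin

(*
  Column stochasticity of the weights makes the network average xbar(t) = (1/n) sum_i x_i(t)
  follow a centralized stochastic gradient step xbar(t+1) = xbar(t) - alpha(t) gbar(t), with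
  the gradients evaluated at the de-biased iterates z_i(t) = x_i(t) / y_i(t). Unrolling push-sum
  through the transition matrices Phi_W and using their geometric mixing bounds
  |z_i(t) - xbar(t)| by a mu-geometrically weighted sum of past step sizes, which is O(1/t)
  in expectation. Strong convexity turns the expansion of |xbar(t+1) - z*|^2 into the recursion
  e(t+1) <= (1 - 2/t) e(t) + B/t^2 for e(t) = E |xbar(t) - z*|^2 (the noise term vanishes since
  the noise has zero mean given the history), and induction on this recursion gives e(t) <= B/t.
*)

section \<open>Push-sum transition matrices\<close>

declare PhiW.simps[simp del]

lemma PhiW_id_mat: "t \<le> \<tau> \<Longrightarrow> PhiW n W t \<tau> = id_mat"
  by (subst PhiW.simps) simp

lemma PhiW_Suc: "\<tau> \<le> t \<Longrightarrow> PhiW n W (Suc t) \<tau> = mat_mul n (W t) (PhiW n W t \<tau>)"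
  by (subst PhiW.simps) simp

lemma sum_scaleR_sum_swap:
  fixes v :: "'b \<Rightarrow> 'v::real_vector"
  assumes "finite A" "finite B"
  shows "(\<Sum>k\<in>A. c k *\<^sub>R (\<Sum>j\<in>B. d k j *\<^sub>R v j)) = (\<Sum>j\<in>B. (\<Sum>k\<in>A. c k * d k j) *\<^sub>R v j)"
  by (simp add: scaleR_sum_right scaleR_sum_left sum.swap[of _ A])

lemma sum_id_mat_scaleR:
  fixes v :: "nat \<Rightarrow> 'v::real_vector"
  assumes "k < n" shows "(\<Sum>j<n. id_mat k j *\<^sub>R v j) = v k"
proof -
  have "id_mat k j *\<^sub>R v j = (if k = j then v k else 0)" for j
    by (simp add: id_mat_def)
  then show ?thesis using assms by simp
qed

lemma PhiW_Suc_apply: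
  fixes v :: "nat \<Rightarrow> 'v::real_vector"
  shows "s \<le> t \<Longrightarrow> (\<Sum>j<n. PhiW n W (Suc t) s i j *\<^sub>R v j)
     = (\<Sum>k<n. W t i k *\<^sub>R (\<Sum>j<n. PhiW n W t s k j *\<^sub>R v j))"
  unfolding PhiW_Suc[of s t] mat_mul_def by (subst sum_scaleR_sum_swap) simp_all

lemma PhiW_Suc_self_apply:
  fixes v :: "nat \<Rightarrow> 'v::real_vector"
  shows "(\<Sum>j<n. PhiW n W (Suc t) t i j *\<^sub>R v j) = (\<Sum>k<n. W t i k *\<^sub>R v k)"
  by (simp add: PhiW_Suc_apply PhiW_id_mat sum_id_mat_scaleR)

lemma push_sum_unroll:
  fixes X Gv :: "nat \<Rightarrow> nat \<Rightarrow> 'v::real_vector"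
  assumes step: "\<And>i t. i < n \<Longrightarrow> 1 \<le> t \<Longrightarrow>
      X i (t + 1) = (\<Sum>j<n. W t i j *\<^sub>R (X j t - a t *\<^sub>R Gv j t))"
    and "1 \<le> t" "i < n"
  shows "X i (t + 1) = (\<Sum>j<n. PhiW n W (t + 1) 1 i j *\<^sub>R (X j 1 - a 1 *\<^sub>R Gv j 1))
      - (\<Sum>s\<in>{2..t}. a s *\<^sub>R (\<Sum>j<n. PhiW n W (t + 1) s i j *\<^sub>R Gv j s))"
  using assms(2,3)
proof (induction t arbitrary: i rule: nat_induct_at_least)
  case base
  then show ?case
    using step[of i 1] PhiW_Suc_self_apply[of n W 1 i "\<lambda>j. X j 1 - a 1 *\<^sub>R Gv j 1"] by simp
next
  case (Suc t)
  define U where "U k = (\<Sum>j<n. PhiW n W (t + 1) 1 k j *\<^sub>R (X j 1 - a 1 *\<^sub>R Gv j 1))" for k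
  define V where "V s k = (\<Sum>j<n. PhiW n W (t + 1) s k j *\<^sub>R Gv j s)" for s k
  have IH: "X k (Suc t) = U k - (\<Sum>s\<in>{2..t}. a s *\<^sub>R V s k)" if "k < n" for k
    using Suc.IH[OF that] by (simp add: U_def V_def)
  have "X i (Suc t + 1) = (\<Sum>k<n. W (t + 1) i k *\<^sub>R (X k (t + 1) - a (t + 1) *\<^sub>R Gv k (t + 1)))"
    using step Suc by simp
  also have "\<dots> = (\<Sum>k<n. W (t + 1) i k *\<^sub>R U k
      - (\<Sum>s\<in>{2..t}. a s *\<^sub>R (W (t + 1) i k *\<^sub>R V s k))
      - a (t + 1) *\<^sub>R (W (t + 1) i k *\<^sub>R Gv k (t + 1)))"
    by (rule sum.cong) (simp_all add: IH scaleR_right_diff_distrib scaleR_sum_right mult.commute)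
  also have "\<dots> = (\<Sum>k<n. W (t + 1) i k *\<^sub>R U k)
      - (\<Sum>s\<in>{2..t}. a s *\<^sub>R (\<Sum>k<n. W (t + 1) i k *\<^sub>R V s k))
      - a (t + 1) *\<^sub>R (\<Sum>k<n. W (t + 1) i k *\<^sub>R Gv k (t + 1))"
    by (simp only: sum_subtractf scaleR_sum_right sum.swap[of _ "{..<n}" "{2..t}"])
  also have "\<dots> = (\<Sum>j<n. PhiW n W (Suc t + 1) 1 i j *\<^sub>R (X j 1 - a 1 *\<^sub>R Gv j 1))
      - (\<Sum>s\<in>{2..t + 1}. a s *\<^sub>R (\<Sum>j<n. PhiW n W (Suc t + 1) s i j *\<^sub>R Gv j s))"
  proof -
    have "(\<Sum>s\<in>{2..t}. a s *\<^sub>R (\<Sum>k<n. W (t + 1) i k *\<^sub>R V s k))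
        = (\<Sum>s\<in>{2..t}. a s *\<^sub>R (\<Sum>j<n. PhiW n W (Suc t + 1) s i j *\<^sub>R Gv j s))"
      by (rule sum.cong) (simp_all add: V_def PhiW_Suc_apply)
    moreover have "{2..t + 1} = insert (t + 1) {2..t}"
      using Suc by auto
    ultimately show ?thesis
      by (simp add: U_def PhiW_Suc_apply PhiW_Suc_self_apply)
  qed
  finally show ?case by simp
qed

lemma norm_sum_scaleR_le:
  fixes v :: "'b \<Rightarrow> 'v::real_normed_vector"
  assumes "\<And>j. j \<in> A \<Longrightarrow> \<bar>c j\<bar> \<le> b"
  shows "norm (\<Sum>j\<in>A. c j *\<^sub>R v j) \<le> b * (\<Sum>j\<in>A. norm (v j))"
proof -
  have "norm (\<Sum>j\<in>A. c j *\<^sub>R v j) \<le> (\<Sum>j\<in>A. \<bar>c j\<bar> * norm (v j))"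
    using norm_sum[of "\<lambda>j. c j *\<^sub>R v j" A] by simp
  also have "\<dots> \<le> (\<Sum>j\<in>A. b * norm (v j))"
    by (intro sum_mono mult_right_mono) (simp_all add: assms)
  finally show ?thesis
    by (simp add: sum_distrib_left)
qed

lemma row_dev_from_mean_le:
  fixes P :: "nat \<Rightarrow> nat \<Rightarrow> real"
  assumes n: "0 < n" and t: "1 \<le> t"
    and mix: "\<And>s j. 1 \<le> s \<Longrightarrow> s \<le> t \<Longrightarrow> j < n \<Longrightarrow> \<bar>P s j - \<phi>\<bar> \<le> 4 * \<mu> ^ (t - s)"
    and \<mu>: "0 < \<mu>" "\<mu> \<le> 1"
    and s: "1 \<le> s" "s \<le> t" and j: "j < n"
  shows "\<bar>P s j - (\<Sum>l<n. P 1 l) / real n\<bar> \<le> 8 * \<mu> ^ (t - s)"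
proof -
  have "\<bar>(\<Sum>l<n. P 1 l) / real n - \<phi>\<bar> = \<bar>\<Sum>l<n. P 1 l - \<phi>\<bar> / real n"
    using n by (simp add: sum_subtractf field_simps)
  also have "\<dots> \<le> (\<Sum>l<n. \<bar>P 1 l - \<phi>\<bar>) / real n"
    by (intro divide_right_mono sum_abs) simp
  also have "\<dots> \<le> (\<Sum>l<n. 4 * \<mu> ^ (t - 1)) / real n"
    by (intro divide_right_mono sum_mono mix) (use t in auto)
  also have "\<dots> = 4 * \<mu> ^ (t - 1)"
    using n by simp
  also have "\<dots> \<le> 4 * \<mu> ^ (t - s)"
    using s \<mu> by (intro mult_left_mono power_decreasing) auto
  finally show ?thesis
    using mix[OF s j] by linarith
qed

text \<open>Subtracting \<open>(\<Sum>j. P 1 j)\<close> times the average leaves only the deviations of the entries of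
  \<open>P s\<close> from the row mean of \<open>P 1\<close>, which mixing makes geometrically small.\<close>
lemma mixing_consensus_bound:
  fixes P :: "nat \<Rightarrow> nat \<Rightarrow> real" and u :: "nat \<Rightarrow> 'v::real_normed_vector"
    and g :: "nat \<Rightarrow> nat \<Rightarrow> 'v"
  assumes n: "0 < n" and t: "1 \<le> t"
    and mix: "\<And>s j. 1 \<le> s \<Longrightarrow> s \<le> t \<Longrightarrow> j < n \<Longrightarrow> \<bar>P s j - \<phi>\<bar> \<le> 4 * \<mu> ^ (t - s)"
    and a: "\<And>s. s \<in> {2..t} \<Longrightarrow> 0 \<le> a s" and \<mu>: "0 < \<mu>" "\<mu> \<le> 1"
  shows "norm ((\<Sum>j<n. P 1 j *\<^sub>R u j) - (\<Sum>s\<in>{2..t}. a s *\<^sub>R (\<Sum>j<n. P s j *\<^sub>R g j s))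
           - (\<Sum>j<n. P 1 j) *\<^sub>R ((1 / real n) *\<^sub>R
               ((\<Sum>j<n. u j) - (\<Sum>s\<in>{2..t}. a s *\<^sub>R (\<Sum>j<n. g j s)))))
         \<le> 8 * \<mu> ^ (t - 1) * (\<Sum>j<n. norm (u j))
           + (\<Sum>s\<in>{2..t}. 8 * \<mu> ^ (t - s) * a s * (\<Sum>j<n. norm (g j s)))"
proof -
  define m where "m = (\<Sum>j<n. P 1 j) / real n"
  have dev: "\<bar>P s j - m\<bar> \<le> 8 * \<mu> ^ (t - s)" if "1 \<le> s" "s \<le> t" "j < n" for s j
    unfolding m_def using n t mix \<mu> that by (rule row_dev_from_mean_le)
  have average: "(\<Sum>j<n. P 1 j) *\<^sub>R ((1 / real n) *\<^sub>R
          ((\<Sum>j<n. u j) - (\<Sum>s\<in>{2..t}. a s *\<^sub>R (\<Sum>j<n. g j s))))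
      = (\<Sum>j<n. m *\<^sub>R u j) - (\<Sum>s\<in>{2..t}. a s *\<^sub>R (\<Sum>j<n. m *\<^sub>R g j s))"
    by (simp add: m_def scaleR_right_diff_distrib scaleR_sum_right mult.commute)
  have "norm ((\<Sum>j<n. P 1 j *\<^sub>R u j) - (\<Sum>s\<in>{2..t}. a s *\<^sub>R (\<Sum>j<n. P s j *\<^sub>R g j s))
           - (\<Sum>j<n. P 1 j) *\<^sub>R ((1 / real n) *\<^sub>R
               ((\<Sum>j<n. u j) - (\<Sum>s\<in>{2..t}. a s *\<^sub>R (\<Sum>j<n. g j s)))))
      = norm ((\<Sum>j<n. (P 1 j - m) *\<^sub>R u j)
          - (\<Sum>s\<in>{2..t}. a s *\<^sub>R (\<Sum>j<n. (P s j - m) *\<^sub>R g j s)))"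
    unfolding average
    by (simp add: scaleR_left_diff_distrib scaleR_right_diff_distrib sum_subtractf algebra_simps)
  also have "\<dots> \<le> norm (\<Sum>j<n. (P 1 j - m) *\<^sub>R u j)
      + (\<Sum>s\<in>{2..t}. a s * norm (\<Sum>j<n. (P s j - m) *\<^sub>R g j s))"
  proof -
    have "norm (\<Sum>s\<in>{2..t}. a s *\<^sub>R (\<Sum>j<n. (P s j - m) *\<^sub>R g j s))
        \<le> (\<Sum>s\<in>{2..t}. norm (a s *\<^sub>R (\<Sum>j<n. (P s j - m) *\<^sub>R g j s)))"
      by (rule norm_sum)
    also have "\<dots> = (\<Sum>s\<in>{2..t}. a s * norm (\<Sum>j<n. (P s j - m) *\<^sub>R g j s))"
      using a by (intro sum.cong) auto
    finally show ?thesis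
      by (rule order_trans[OF norm_triangle_ineq4 add_left_mono])
  qed
  also have "\<dots> \<le> 8 * \<mu> ^ (t - 1) * (\<Sum>j<n. norm (u j))
      + (\<Sum>s\<in>{2..t}. a s * (8 * \<mu> ^ (t - s) * (\<Sum>j<n. norm (g j s))))"
    using dev t a by (intro add_mono sum_mono mult_left_mono norm_sum_scaleR_le) auto
  finally show ?thesis
    by (simp add: mult.commute mult.left_commute)
qed

section \<open>Orthogonality to a sub-sigma-algebra\<close>

definition gen_measure :: "'a measure \<Rightarrow> ('a \<Rightarrow> 'b::topological_space) set \<Rightarrow> 'a measure" where
  "gen_measure M Xs = sigma (space M) (\<Union>X\<in>Xs. {X -` B \<inter> space M | B. B \<in> sets borel})"

lemma sets_gen_measure: "sets (gen_measure M Xs) = gen_events M Xs"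
  unfolding gen_measure_def gen_events_def by (rule sets_measure_of) auto

lemma space_gen_measure: "space (gen_measure M Xs) = space M"
  unfolding gen_measure_def by (rule space_measure_of) auto

lemma subalgebra_gen_measure:
  assumes "Xs \<subseteq> borel_measurable M"
  shows "subalgebra M (gen_measure M Xs)"
  unfolding subalgebra_def space_gen_measure sets_gen_measure gen_events_def
  using assms by (auto intro!: sets.sigma_sets_subset measurable_sets)

lemma measurable_gen_measure:
  assumes "X \<in> Xs"
  shows "X \<in> borel_measurable (gen_measure M Xs)"
proof (rule measurableI)
  fix B :: "'b set"
  assume "B \<in> sets borel"
  then show "X -` B \<inter> space (gen_measure M Xs) \<in> sets (gen_measure M Xs)"
    unfolding sets_gen_measure space_gen_measure gen_events_def
    using assms by (intro sigma_sets.Basic) blast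
qed (simp add: space_gen_measure)

lemma integral_mult_eq_0_if_set_integrals_0:
  fixes X Y :: "'a \<Rightarrow> real"
  assumes "prob_space M" and sub: "subalgebra M F"
    and X: "X \<in> borel_measurable M" "integrable M X"
    and X_0: "\<And>A. A \<in> sets F \<Longrightarrow> (\<integral>x\<in>A. X x \<partial>M) = 0"
    and Y: "Y \<in> borel_measurable F" and YX: "integrable M (\<lambda>x. Y x * X x)"
  shows "(\<integral>x. Y x * X x \<partial>M) = 0"
proof -
  interpret prob_space M by fact
  interpret finite_measure_subalgebra M F
    by unfold_locales (rule sub)
  have "AE x in M. real_cond_exp M F X x = 0"
    by (rule real_cond_exp_charact) (use X_0 X in auto)
  moreover have "(\<integral>x. Y x * X x \<partial>M) = (\<integral>x. Y x * real_cond_exp M F X x \<partial>M)"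
    by (rule real_cond_exp_intg(2)[symmetric]) (use YX Y X in auto)
  moreover have "(\<integral>x. Y x * real_cond_exp M F X x \<partial>M) = (\<integral>x. 0 \<partial>M)"
    by (rule integral_cong_AE) (use calculation(1) Y measurable_from_subalg[OF sub Y] in auto)
  ultimately show ?thesis
    by simp
qed

lemma (in finite_measure) integrable_mult_inner_Basis:
  fixes X Y :: "'a \<Rightarrow> 'v::euclidean_space"
  assumes [measurable]: "X \<in> borel_measurable M" "Y \<in> borel_measurable M"
    and bounds: "AE x in M. norm (X x) \<le> cX" "AE x in M. norm (Y x) \<le> cY"
    and b: "b \<in> Basis"
  shows "integrable M (\<lambda>x. (Y x \<bullet> b) * (X x \<bullet> b))"
proof (rule integrable_const_bound[where B = "cY * cX"])
  show "AE x in M. norm ((Y x \<bullet> b) * (X x \<bullet> b)) \<le> cY * cX"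
    using bounds
  proof eventually_elim
    case (elim x)
    have "norm ((Y x \<bullet> b) * (X x \<bullet> b)) \<le> norm (Y x) * norm (X x)"
      using Basis_le_norm[OF b] by (simp add: abs_mult mult_mono)
    also have "\<dots> \<le> cY * cX"
      by (rule mult_mono[OF elim(2,1) order_trans[OF norm_ge_zero elim(2)] norm_ge_zero])
    finally show ?case .
  qed
qed measurable

lemma integral_inner_eq_0_if_set_integrals_0:
  fixes X Y :: "'a \<Rightarrow> 'v::euclidean_space"
  assumes M: "prob_space M" and sub: "subalgebra M F"
    and X: "X \<in> borel_measurable M" "AE x in M. norm (X x) \<le> cX"
    and X_0: "\<And>A. A \<in> sets F \<Longrightarrow> (\<integral>x\<in>A. X x \<partial>M) = 0"
    and Y: "Y \<in> borel_measurable F" "AE x in M. norm (Y x) \<le> cY"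
  shows "(\<integral>x. X x \<bullet> Y x \<partial>M) = 0"
proof -
  interpret prob_space M by fact
  have [measurable]: "Y \<in> borel_measurable M"
    using measurable_from_subalg[OF sub Y(1)] .
  have [measurable]: "X \<in> borel_measurable M"
    by fact
  have X_int: "integrable M X"
    using X(2) by (rule integrable_const_bound) measurable
  have int: "integrable M (\<lambda>x. (Y x \<bullet> b) * (X x \<bullet> b))" if "b \<in> Basis" for b
    by (rule integrable_mult_inner_Basis[OF _ _ X(2) Y(2) that]) measurable
  have coordinate: "(\<integral>x. (Y x \<bullet> b) * (X x \<bullet> b) \<partial>M) = 0" if b: "b \<in> Basis" for b
  proof (rule integral_mult_eq_0_if_set_integrals_0[OF M sub _ _ _ _ int[OF b]])
    fix A assume A: "A \<in> sets F"
    then have "A \<in> sets M"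
      using sub by (auto simp: subalgebra_def)
    then have "(\<integral>x\<in>A. X x \<bullet> b \<partial>M) = (\<integral>x\<in>A. X x \<partial>M) \<bullet> b"
      unfolding set_lebesgue_integral_def using X_int
      by (subst integral_inner_left[symmetric]) (auto intro: integrable_mult_indicator)
    then show "(\<integral>x\<in>A. X x \<bullet> b \<partial>M) = 0"
      using X_0[OF A] by simp
  qed (use X_int Y(1) in auto)
  have "X x \<bullet> Y x = (\<Sum>b\<in>Basis. (Y x \<bullet> b) * (X x \<bullet> b))" for x
    by (subst euclidean_inner) (simp add: mult.commute)
  then have "(\<integral>x. X x \<bullet> Y x \<partial>M) = (\<integral>x. (\<Sum>b\<in>Basis. (Y x \<bullet> b) * (X x \<bullet> b)) \<partial>M)"
    by simp
  also have "\<dots> = 0"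
    using int coordinate by simp
  finally show ?thesis .
qed

section \<open>Decay estimates and a recursion of order 1/t\<close>

text \<open>The maximum of \<open>s \<mu>^s\<close> over \<open>s \<ge> 0\<close>, attained at \<open>s = -1 / ln \<mu>\<close>.\<close>
definition decay_const :: "real \<Rightarrow> real" where
  "decay_const \<mu> = - (\<mu> powr (- 1 / ln \<mu>)) / ln \<mu>"

lemma mult_powr_le_decay_const:
  fixes \<mu> s :: real
  assumes "0 < \<mu>" "\<mu> < 1" "0 \<le> s"
  shows "s * \<mu> powr s \<le> decay_const \<mu>"
proof -
  define c where "c = - ln \<mu>"
  have c: "0 < c"
    using assms by (simp add: c_def)
  have "c * s \<le> exp (c * s - 1)"
    using exp_ge_add_one_self[of "c * s - 1"] by simp
  then have "s * exp (- c * s) \<le> exp (-1) / c"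
    using c by (simp add: exp_diff exp_minus field_simps)
  then show ?thesis
    using assms c by (simp add: decay_const_def powr_def c_def mult.commute)
qed

lemma mult_power_le_decay_const:
  fixes \<mu> :: real
  assumes "0 < \<mu>" "\<mu> < 1"
  shows "real k * \<mu> ^ k \<le> decay_const \<mu>"
  using mult_powr_le_decay_const[OF assms, of "real k"] assms by (simp add: powr_realpow)

lemma decay_const_nonneg: "0 < \<mu> \<Longrightarrow> \<mu> < 1 \<Longrightarrow> 0 \<le> decay_const \<mu>"
  using mult_power_le_decay_const[of \<mu> 0] by simp

lemma sum_power_sqrt_le:
  fixes \<mu> :: real
  assumes "0 < \<mu>" "\<mu> < 1"
  shows "(\<Sum>r<t. sqrt \<mu> ^ r) \<le> 2 / (1 - \<mu>)"
proof -
  have \<nu>: "0 < sqrt \<mu>" "sqrt \<mu> < 1"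
    using assms by (auto simp: real_sqrt_lt_1_iff)
  have "(\<Sum>r<t. sqrt \<mu> ^ r) = (1 - sqrt \<mu> ^ t) / (1 - sqrt \<mu>)"
    using \<nu> by (simp add: sum_gp_strict)
  also have "\<dots> \<le> 1 / (1 - sqrt \<mu>)"
    using \<nu> by (simp add: divide_right_mono)
  also have "\<dots> = (1 + sqrt \<mu>) / (1 - \<mu>)"
    using \<nu> assms by (simp add: field_simps)
  also have "\<dots> \<le> 2 / (1 - \<mu>)"
    using \<nu> assms by (intro divide_right_mono) auto
  finally show ?thesis .
qed

text \<open>Splitting \<open>\<mu>^k = \<surd>\<mu>^k \<surd>\<mu>^k\<close> lets one factor absorb the growth of \<open>t / r \<le> k + 2\<close>.\<close>
lemma mult_power_div_le:
  fixes \<mu> :: real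
  assumes \<mu>: "0 < \<mu>" "\<mu> < 1" and r: "1 \<le> r" "r < t"
  shows "real t * (\<mu> ^ (t - 1 - r) / real r) \<le> 2 * (1 + decay_const \<mu>) * sqrt \<mu> ^ (t - 1 - r)"
proof -
  define k where "k = t - 1 - r"
  define \<nu> where "\<nu> = sqrt \<mu>"
  have \<nu>: "0 \<le> \<nu>" "\<nu> \<le> 1" "\<mu> ^ k = \<nu> ^ k * \<nu> ^ k"
    using \<mu> by (auto simp: \<nu>_def power_mult_distrib[symmetric])
  have "real t = real k + 1 + real r"
    using r by (simp add: k_def)
  moreover have "real k * 1 \<le> real k * real r"
    using r by (intro mult_left_mono) auto
  ultimately have "real t \<le> (2 + real k) * real r"
    using r by (simp add: algebra_simps)
  then have "real t / real r \<le> 2 + real k"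
    using r by (simp add: divide_le_eq)
  have "real k / 2 * \<mu> powr (real k / 2) \<le> decay_const \<mu>"
    using mult_powr_le_decay_const[OF \<mu>, of "real k / 2"] by simp
  moreover have "\<mu> powr (real k / 2) = \<nu> ^ k"
    using \<mu> by (simp add: \<nu>_def powr_half_sqrt_powr powr_realpow real_sqrt_power)
  ultimately have k: "real k * \<nu> ^ k \<le> 2 * decay_const \<mu>"
    by simp
  have "real t * (\<mu> ^ k / real r) \<le> (2 + real k) * \<mu> ^ k"
    using mult_right_mono[OF \<open>real t / real r \<le> 2 + real k\<close>, of "\<mu> ^ k"] \<mu> by simp
  also have "\<dots> = 2 * \<nu> ^ k * \<nu> ^ k + (real k * \<nu> ^ k) * \<nu> ^ k"
    using \<nu> by (simp add: algebra_simps)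
  also have "\<dots> \<le> 2 * \<nu> ^ k + 2 * decay_const \<mu> * \<nu> ^ k"
    using \<nu> k by (intro add_mono mult_right_mono) (auto simp: mult_left_le power_le_one)
  finally show ?thesis
    by (simp add: k_def \<nu>_def algebra_simps)
qed

lemma sum_power_div_le:
  fixes \<mu> :: real
  assumes "0 < \<mu>" "\<mu> < 1"
  shows "real t * (\<Sum>r\<in>{2..<t}. \<mu> ^ (t - 1 - r) / real r) \<le> 4 * (decay_const \<mu> + 1) / (1 - \<mu>)"
proof -
  have K: "0 \<le> 2 * (1 + decay_const \<mu>)"
    using decay_const_nonneg[OF assms] by simp
  have "real t * (\<Sum>r\<in>{2..<t}. \<mu> ^ (t - 1 - r) / real r)
      \<le> (\<Sum>r\<in>{2..<t}. 2 * (1 + decay_const \<mu>) * sqrt \<mu> ^ (t - Suc r))"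
    unfolding sum_distrib_left using mult_power_div_le[OF assms] by (intro sum_mono) auto
  also have "\<dots> \<le> (\<Sum>r<t. 2 * (1 + decay_const \<mu>) * sqrt \<mu> ^ (t - Suc r))"
    using K assms by (intro sum_mono2) auto
  also have "\<dots> = 2 * (1 + decay_const \<mu>) * (\<Sum>r<t. sqrt \<mu> ^ r)"
    by (simp add: sum_distrib_left[symmetric] sum.nat_diff_reindex)
  also have "\<dots> \<le> 2 * (1 + decay_const \<mu>) * (2 / (1 - \<mu>))"
    using K by (intro mult_left_mono sum_power_sqrt_le assms)
  finally show ?thesis
    by (simp add: add_divide_distrib algebra_simps)
qed

lemma recursion_le_div:
  fixes e :: "nat \<Rightarrow> real"
  assumes B: "0 \<le> B" and e1: "e 1 \<le> B" and e2: "2 * e 2 \<le> B"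
    and step: "\<And>t. 2 \<le> t \<Longrightarrow> e (t + 1) \<le> (1 - 2 / real t) * e t + B / (real t)\<^sup>2"
    and t: "1 \<le> t"
  shows "e t \<le> B / real t"
proof -
  have "e t \<le> B / real t" if "2 \<le> t" for t
    using that
  proof (induction t rule: nat_induct_at_least)
    case base
    then show ?case
      using e2 by simp
  next
    case (Suc t)
    define u where "u = real t"
    have u: "2 \<le> u"
      using Suc by (simp add: u_def)
    have "e (t + 1) \<le> (1 - 2 / u) * e t + B / u\<^sup>2"
      using step[OF Suc(1)] by (simp add: u_def)
    also have "\<dots> \<le> (1 - 2 / u) * (B / u) + B / u\<^sup>2"
      using mult_left_mono[OF Suc.IH, of "1 - 2 / u"] u by (simp add: u_def)
    also have "\<dots> = B * (u - 1) / u\<^sup>2"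
      using u by (simp add: field_simps power2_eq_square)
    also have "\<dots> \<le> B / (u + 1)"
      using u B by (simp add: field_simps power2_eq_square mult_left_mono)
    finally show ?case
      by (simp add: u_def add.commute)
  qed
  then show ?thesis
    using e1 t by (cases "t = 1") auto
qed

section \<open>Strongly convex sums\<close>

locale strongly_convex_sum =
  fixes n :: nat and f :: "nat \<Rightarrow> 'v::euclidean_space \<Rightarrow> real" and grad :: "nat \<Rightarrow> 'v \<Rightarrow> 'v"
    and lam gam :: "nat \<Rightarrow> real" and zstar :: 'v and lambar :: real
  assumes n_pos: "0 < n"
    and lambar_eq: "lambar = (\<Sum>i<n. lam i) / real n"
    and lam_pos: "\<And>i. i < n \<Longrightarrow> 0 < lam i"
    and f_sconv: "\<And>i u v. i < n \<Longrightarrow>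
                   f i u - f i v \<ge> grad i v \<bullet> (u - v) + lam i / 2 * (norm (u - v))\<^sup>2"
    and f_smooth: "\<And>i u v. i < n \<Longrightarrow> norm (grad i u - grad i v) \<le> gam i * norm (u - v)"
    and zstar_min: "\<And>v. v \<noteq> zstar \<Longrightarrow>
                   (\<Sum>i<n. f i zstar) / real n < (\<Sum>i<n. f i v) / real n"
begin

lemma lambar_pos: "0 < lambar"
  unfolding lambar_eq using n_pos lam_pos by (intro divide_pos_pos sum_pos) auto

lemma sum_lam: "(\<Sum>i<n. lam i) = real n * lambar"
  unfolding lambar_eq using n_pos by simp

lemma norm_grad_diff_le: "i < n \<Longrightarrow> norm (grad i u - grad i v) \<le> \<bar>gam i\<bar> * norm (u - v)"
  using f_smooth[of i u v] mult_right_mono[OF abs_ge_self norm_ge_zero, of "gam i" "u - v"]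
  by (rule order_trans)

lemma grad_borel: "i < n \<Longrightarrow> grad i \<in> borel_measurable borel"
  using norm_grad_diff_le
  by (intro borel_measurable_continuous_onI lipschitz_on_continuous_on[of "\<bar>gam i\<bar>"] lipschitz_onI)
    (auto simp: dist_norm)

lemma f_le_grad_upper:
  assumes i: "i < n"
  shows "f i u - f i v \<le> grad i v \<bullet> (u - v) + \<bar>gam i\<bar> * (norm (u - v))\<^sup>2"
proof -
  have "0 \<le> lam i / 2 * (norm (v - u))\<^sup>2"
    using lam_pos[OF i] by simp
  then have "grad i u \<bullet> (v - u) \<le> f i v - f i u"
    using f_sconv[OF i, of u v] by linarith
  then have "f i u - f i v \<le> grad i u \<bullet> (u - v)"
    by (simp add: inner_diff_right)
  also have "\<dots> = grad i v \<bullet> (u - v) + (grad i u - grad i v) \<bullet> (u - v)"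
    by (simp add: inner_diff_left)
  also have "(grad i u - grad i v) \<bullet> (u - v) \<le> norm (grad i u - grad i v) * norm (u - v)"
    by (rule norm_cauchy_schwarz)
  also have "\<dots> \<le> \<bar>gam i\<bar> * norm (u - v) * norm (u - v)"
    using norm_grad_diff_le[OF i, of u v] by (intro mult_right_mono) auto
  finally show ?thesis
    by (simp add: power2_eq_square mult.assoc)
qed

text \<open>A nonzero gradient sum \<open>d\<close> would make \<open>zstar - d /\<^sub>R (\<Sum>i. \<bar>gam i\<bar> + 1)\<close> a better point, by
  the quadratic upper bound.\<close>
lemma sum_grad_zstar: "(\<Sum>i<n. grad i zstar) = 0"
proof (rule ccontr)
  define d where "d = (\<Sum>i<n. grad i zstar)"
  define \<Gamma> where "\<Gamma> = (\<Sum>i<n. \<bar>gam i\<bar>)"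
  define s where "s = 1 / (\<Gamma> + 1)"
  define v where "v = zstar - s *\<^sub>R d"
  assume "(\<Sum>i<n. grad i zstar) \<noteq> 0"
  then have d: "d \<noteq> 0"
    by (simp add: d_def)
  have \<Gamma>: "0 \<le> \<Gamma>"
    unfolding \<Gamma>_def by (intro sum_nonneg) auto
  then have s: "0 < s" "1 - \<Gamma> * s = s"
    by (simp_all add: s_def field_simps)
  have "(\<Sum>i<n. f i v - f i zstar) \<le> (\<Sum>i<n. grad i zstar \<bullet> (v - zstar) + \<bar>gam i\<bar> * (norm (v - zstar))\<^sup>2)"
    by (intro sum_mono f_le_grad_upper) simp
  also have "\<dots> = d \<bullet> (v - zstar) + \<Gamma> * (norm (v - zstar))\<^sup>2"
    by (simp add: d_def \<Gamma>_def sum.distrib inner_sum_left sum_distrib_right)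
  also have "\<dots> = - s * (norm d)\<^sup>2 * (1 - \<Gamma> * s)"
    using s by (simp add: v_def power2_norm_eq_inner[symmetric] power_mult_distrib algebra_simps power2_eq_square)
  also have "\<dots> < 0"
    using s d by simp
  finally have "(\<Sum>i<n. f i v) < (\<Sum>i<n. f i zstar)"
    by (simp add: sum_subtractf)
  moreover have "(\<Sum>i<n. f i zstar) / real n < (\<Sum>i<n. f i v) / real n"
    using s d by (intro zstar_min) (simp add: v_def)
  then have "(\<Sum>i<n. f i zstar) < (\<Sum>i<n. f i v)"
    using n_pos by (simp add: divide_less_cancel)
  ultimately show False
    by simp
qed

lemma dist_zstar_le:
  assumes bound: "\<And>i. i < n \<Longrightarrow> norm (grad i p) \<le> G"
  shows "norm (p - zstar) \<le> G / lambar"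
proof -
  have monotone: "lam i * (norm (p - zstar))\<^sup>2 \<le> (grad i p - grad i zstar) \<bullet> (p - zstar)" if i: "i < n" for i
    using f_sconv[OF i, of p zstar] f_sconv[OF i, of zstar p]
    by (simp add: inner_diff_left inner_diff_right norm_minus_commute algebra_simps)
  have "real n * lambar * (norm (p - zstar))\<^sup>2 = (\<Sum>i<n. lam i * (norm (p - zstar))\<^sup>2)"
    by (simp add: sum_distrib_right[symmetric] sum_lam)
  also have "\<dots> \<le> (\<Sum>i<n. (grad i p - grad i zstar) \<bullet> (p - zstar))"
    by (intro sum_mono monotone) simp
  also have "\<dots> = (\<Sum>i<n. grad i p) \<bullet> (p - zstar)"
    by (simp add: inner_sum_left[symmetric] sum_subtractf sum_grad_zstar inner_diff_left)
  also have "\<dots> \<le> norm (\<Sum>i<n. grad i p) * norm (p - zstar)"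
    by (rule norm_cauchy_schwarz)
  also have "\<dots> \<le> (real n * G) * norm (p - zstar)"
    using norm_sum[of "\<lambda>i. grad i p" "{..<n}"] sum_mono[of "{..<n}" "\<lambda>i. norm (grad i p)" "\<lambda>_. G"] bound
    by (intro mult_right_mono) force+
  finally have "(real n * norm (p - zstar)) * (lambar * norm (p - zstar)) \<le> (real n * norm (p - zstar)) * G"
    by (simp add: power2_eq_square algebra_simps)
  moreover have "0 \<le> G"
    using bound[OF n_pos] by (rule order_trans[OF norm_ge_zero])
  ultimately have "lambar * norm (p - zstar) \<le> G"
    using n_pos by (cases "p = zstar") (auto simp: mult_le_cancel_left_pos)
  then show ?thesis
    using lambar_pos by (simp add: field_simps)
qed

text \<open>Strong convexity applied along the three edges of the triangle \<open>zstar\<close>, \<open>q j\<close>, \<open>p\<close>.\<close>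
lemma sum_grad_inner_ge:
  assumes bound_q: "\<And>j. j < n \<Longrightarrow> norm (grad j (q j)) \<le> G"
    and bound_p: "\<And>j. j < n \<Longrightarrow> norm (grad j p) \<le> G"
  shows "(\<Sum>j<n. grad j (q j) \<bullet> (p - zstar)) \<ge>
           real n * lambar / 2 * (norm (p - zstar))\<^sup>2 - 2 * G * (\<Sum>j<n. norm (q j - p))"
proof -
  have each: "grad j (q j) \<bullet> (p - zstar) \<ge> grad j zstar \<bullet> (p - zstar) + lam j / 2 * (norm (p - zstar))\<^sup>2
        - 2 * G * norm (q j - p)" if j: "j < n" for j
  proof -
    have "\<bar>grad j (q j) \<bullet> (p - q j)\<bar> \<le> G * norm (q j - p)"
      using Cauchy_Schwarz_ineq2[of "grad j (q j)" "p - q j"] bound_q[OF j]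
      by (simp add: norm_minus_commute mult_right_mono order_trans)
    moreover have "\<bar>grad j p \<bullet> (q j - p)\<bar> \<le> G * norm (q j - p)"
      using Cauchy_Schwarz_ineq2[of "grad j p" "q j - p"] bound_p[OF j]
      by (simp add: mult_right_mono order_trans)
    moreover have "0 \<le> lam j / 2 * (norm (zstar - q j))\<^sup>2" "0 \<le> lam j / 2 * (norm (q j - p))\<^sup>2"
      using lam_pos[OF j] by auto
    ultimately show ?thesis
      using f_sconv[OF j, of "q j" zstar] f_sconv[OF j, of p "q j"] f_sconv[OF j, of zstar p]
      by (simp add: inner_diff_right abs_le_iff)
  qed
  have "real n * lambar / 2 * (norm (p - zstar))\<^sup>2 - 2 * G * (\<Sum>j<n. norm (q j - p))
      = (\<Sum>j<n. grad j zstar \<bullet> (p - zstar) + lam j / 2 * (norm (p - zstar))\<^sup>2 - 2 * G * norm (q j - p))"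
    using sum_grad_zstar sum_lam
    by (simp add: sum.distrib sum_subtractf sum_distrib_left sum_distrib_right[symmetric]
        sum_divide_distrib[symmetric] inner_sum_left[symmetric])
  also have "\<dots> \<le> (\<Sum>j<n. grad j (q j) \<bullet> (p - zstar))"
    by (intro sum_mono each) simp
  finally show ?thesis .
qed

end

section \<open>Stochastic gradient-push\<close>

lemma norm_mean_sq_le:
  fixes v :: "nat \<Rightarrow> 'v::real_normed_vector"
  assumes "0 < n"
  shows "(norm ((1 / real n) *\<^sub>R (\<Sum>j<n. v j)))\<^sup>2 \<le> (\<Sum>j<n. (norm (v j))\<^sup>2) / real n"
proof -
  have "(norm ((1 / real n) *\<^sub>R (\<Sum>j<n. v j)))\<^sup>2 \<le> ((\<Sum>j<n. norm (v j) * 1) / real n)\<^sup>2"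
    using norm_sum[of v "{..<n}"] by (intro power_mono) (simp_all add: divide_right_mono)
  also have "\<dots> \<le> ((\<Sum>j<n. (norm (v j))\<^sup>2) * real n) / (real n)\<^sup>2"
    unfolding power_divide
    using Cauchy_Schwarz_ineq_sum[of "\<lambda>j. norm (v j)" "\<lambda>_. 1" "{..<n}"] by (intro divide_right_mono) simp_all
  also have "\<dots> = (\<Sum>j<n. (norm (v j))\<^sup>2) / real n"
    using assms by (simp add: power2_eq_square)
  finally show ?thesis .
qed

locale stochastic_gradient_push = strongly_convex_sum n f grad lam gam zstar lambar
  for n :: nat and f :: "nat \<Rightarrow> 'v::euclidean_space \<Rightarrow> real" and grad lam gam zstar lambar +
  fixes M :: "'a measure"
    and w :: "nat \<Rightarrow> nat \<Rightarrow> nat \<Rightarrow> real"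
    and c :: "nat \<Rightarrow> real"
    and x :: "nat \<Rightarrow> nat \<Rightarrow> 'a \<Rightarrow> 'v"
    and y :: "nat \<Rightarrow> nat \<Rightarrow> real"
    and gt :: "nat \<Rightarrow> nat \<Rightarrow> 'a \<Rightarrow> 'v"
    and N :: "nat \<Rightarrow> nat \<Rightarrow> 'a \<Rightarrow> 'v \<Rightarrow> 'v"
    and \<alpha> :: "nat \<Rightarrow> real"
    and G \<eta> \<mu> :: real
    and z :: "nat \<Rightarrow> nat \<Rightarrow> 'a \<Rightarrow> 'v"
  assumes prob: "prob_space M"
    and w_colsum: "\<And>t j. j < n \<Longrightarrow> (\<Sum>i<n. w t i j) = 1"
    and z_def: "z = (\<lambda>i t \<omega>. (1 / y i t) *\<^sub>R x i t \<omega>)"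
    and \<alpha>_def: "\<And>t. 1 \<le> t \<Longrightarrow> \<alpha> t = 2 / (lambar * real t)"
    and x_meas: "\<And>i. i < n \<Longrightarrow> x i 1 \<in> borel_measurable M"
    and x1_int: "\<And>i. i < n \<Longrightarrow> integrable M (\<lambda>\<omega>. norm (x i 1 \<omega>))"
    and x_step: "\<And>i t \<omega>. i < n \<Longrightarrow> 1 \<le> t \<Longrightarrow>
                   x i (t + 1) \<omega> = (\<Sum>j<n. w t i j *\<^sub>R (x j t \<omega> - \<alpha> t *\<^sub>R gt j t \<omega>))"
    and y_1: "\<And>i. i < n \<Longrightarrow> y i 1 = 1"
    and y_step: "\<And>i t. i < n \<Longrightarrow> 1 \<le> t \<Longrightarrow> y i (t + 1) = (\<Sum>j<n. w t i j * y j t)"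
    and gt_meas: "\<And>i t. i < n \<Longrightarrow> 1 \<le> t \<Longrightarrow> gt i t \<in> borel_measurable M"
    and gt_def: "\<And>i t \<omega>. i < n \<Longrightarrow> 1 \<le> t \<Longrightarrow>
                   gt i t \<omega> = grad i (z i t \<omega>) + N i t \<omega> (z i t \<omega>)"
    and N_zero_mean: "\<And>i t A. i < n \<Longrightarrow> 1 \<le> t \<Longrightarrow> A \<in> hist M n x gt t \<Longrightarrow>
                   (LINT \<omega>:A|M. N i t \<omega> (z i t \<omega>)) = 0"
    and N_bdd: "\<And>i t. i < n \<Longrightarrow> 1 \<le> t \<Longrightarrow> AE \<omega> in M. \<forall>v. norm (N i t \<omega> v) \<le> c i"
    and G_pos: "0 < G"
    and G_sq: "\<And>i t. i < n \<Longrightarrow> 1 \<le> t \<Longrightarrow>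
                   integrable M (\<lambda>\<omega>. (norm (gt i t \<omega>))\<^sup>2) \<and>
                   integral\<^sup>L M (\<lambda>\<omega>. (norm (gt i t \<omega>))\<^sup>2) \<le> G\<^sup>2"
    and G_grad_z: "\<And>i t. i < n \<Longrightarrow> 1 \<le> t \<Longrightarrow> AE \<omega> in M. norm (grad i (z i t \<omega>)) \<le> G"
    and G_grad_avg: "\<And>i t. i < n \<Longrightarrow> 1 \<le> t \<Longrightarrow>
                   AE \<omega> in M. norm (grad i ((1 / real n) *\<^sub>R (\<Sum>k<n. x k t \<omega>))) \<le> G"
    and \<eta>_pos: "0 < \<eta>"
    and \<eta>_bound: "\<And>i t. i < n \<Longrightarrow> 1 \<le> t \<Longrightarrow> \<eta> \<le> y i t"
    and \<mu>_range: "0 < \<mu>" "\<mu> < 1"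
    and \<mu>_mixing: "\<exists>\<phi> :: nat \<Rightarrow> nat \<Rightarrow> real. \<forall>t. stoch_vec n (\<phi> t) \<and>
                   (\<forall>s i j. 1 \<le> s \<longrightarrow> s \<le> t \<longrightarrow> i < n \<longrightarrow> j < n \<longrightarrow>
                      \<bar>PhiW n w (t + 1) s i j - \<phi> t i\<bar> \<le> 4 * \<mu> ^ (t - s))"
begin

sublocale prob_space M
  by (rule prob)

definition xbar :: "nat \<Rightarrow> 'a \<Rightarrow> 'v" where
  "xbar t \<omega> = (1 / real n) *\<^sub>R (\<Sum>k<n. x k t \<omega>)"

definition gbar :: "nat \<Rightarrow> 'a \<Rightarrow> 'v" where
  "gbar t \<omega> = (1 / real n) *\<^sub>R (\<Sum>j<n. gt j t \<omega>)"

definition first_step :: "nat \<Rightarrow> 'a \<Rightarrow> 'v" where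
  "first_step j \<omega> = x j 1 \<omega> - \<alpha> 1 *\<^sub>R gt j 1 \<omega>"

definition err :: "nat \<Rightarrow> real" where
  "err t = integral\<^sup>L M (\<lambda>\<omega>. (norm (xbar t \<omega> - zstar))\<^sup>2)"

lemma \<alpha>_nonneg: "1 \<le> t \<Longrightarrow> 0 \<le> \<alpha> t"
  using \<alpha>_def lambar_pos by simp

lemma gt_norm_integrable: "i < n \<Longrightarrow> 1 \<le> t \<Longrightarrow> integrable M (\<lambda>\<omega>. norm (gt i t \<omega>))"
  by (rule square_integrable_imp_integrable) (use G_sq gt_meas in auto)

lemma gt_integrable: "i < n \<Longrightarrow> 1 \<le> t \<Longrightarrow> integrable M (gt i t)"
  using gt_norm_integrable gt_meas integrable_norm_iff by blast

text \<open>From \<open>2 G r \<le> r\<^sup>2 + G\<^sup>2\<close> and the second-moment bound.\<close>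
lemma integral_norm_gt_le:
  assumes "i < n" "1 \<le> t"
  shows "integral\<^sup>L M (\<lambda>\<omega>. norm (gt i t \<omega>)) \<le> G"
proof -
  have pointwise: "norm (gt i t \<omega>) \<le> ((norm (gt i t \<omega>))\<^sup>2 + G\<^sup>2) / (2 * G)" for \<omega>
    using G_pos sum_squares_bound[of "norm (gt i t \<omega>)" G] by (simp add: field_simps power2_eq_square)
  have "integral\<^sup>L M (\<lambda>\<omega>. norm (gt i t \<omega>)) \<le> integral\<^sup>L M (\<lambda>\<omega>. ((norm (gt i t \<omega>))\<^sup>2 + G\<^sup>2) / (2 * G))"
    using gt_norm_integrable[OF assms] G_sq[OF assms] pointwise by (intro integral_mono) auto
  also have "\<dots> = (integral\<^sup>L M (\<lambda>\<omega>. (norm (gt i t \<omega>))\<^sup>2) + G\<^sup>2) / (2 * G)"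
    using G_sq[OF assms] by (simp add: prob_space)
  also have "\<dots> \<le> (G\<^sup>2 + G\<^sup>2) / (2 * G)"
    using G_sq[OF assms] G_pos by (intro divide_right_mono) auto
  also have "\<dots> = G"
    using G_pos by (simp add: power2_eq_square)
  finally show ?thesis .
qed

lemma x_borel: "1 \<le> t \<Longrightarrow> i < n \<Longrightarrow> x i t \<in> borel_measurable M"
proof (induction t arbitrary: i rule: nat_induct_at_least)
  case base
  then show ?case using x_meas by simp
next
  case (Suc t)
  have [measurable]: "\<And>j. j \<in> {..<n} \<Longrightarrow> x j t \<in> borel_measurable M"
    "\<And>j. j \<in> {..<n} \<Longrightarrow> gt j t \<in> borel_measurable M"
    using Suc gt_meas by auto
  have "x i (Suc t) = (\<lambda>\<omega>. \<Sum>j<n. w t i j *\<^sub>R (x j t \<omega> - \<alpha> t *\<^sub>R gt j t \<omega>))"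
    using x_step[of i t] Suc by auto
  then show ?case
    by simp
qed

lemma x_integrable: "1 \<le> t \<Longrightarrow> i < n \<Longrightarrow> integrable M (x i t)"
proof (induction t arbitrary: i rule: nat_induct_at_least)
  case base
  then show ?case using x1_int x_meas integrable_norm_iff by blast
next
  case (Suc t)
  have "x i (Suc t) = (\<lambda>\<omega>. \<Sum>j<n. w t i j *\<^sub>R (x j t \<omega> - \<alpha> t *\<^sub>R gt j t \<omega>))"
    using x_step[of i t] Suc by auto
  then show ?case
    using Suc gt_integrable by (auto intro!: Bochner_Integration.integrable_sum)
qed

lemma xbar_borel: "1 \<le> t \<Longrightarrow> xbar t \<in> borel_measurable M"
  unfolding xbar_def[abs_def] using x_borel by (intro borel_measurable_scaleR borel_measurable_sum) auto

lemma xbar_integrable: "1 \<le> t \<Longrightarrow> integrable M (xbar t)"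
  unfolding xbar_def[abs_def] using x_integrable by (auto intro!: Bochner_Integration.integrable_sum)

lemma z_borel: "i < n \<Longrightarrow> 1 \<le> t \<Longrightarrow> z i t \<in> borel_measurable M"
  unfolding z_def using x_borel by simp

lemma z_integrable: "i < n \<Longrightarrow> 1 \<le> t \<Longrightarrow> integrable M (z i t)"
  unfolding z_def using x_integrable by auto

lemma xbar_step: "1 \<le> t \<Longrightarrow> xbar (t + 1) \<omega> = xbar t \<omega> - \<alpha> t *\<^sub>R gbar t \<omega>"
proof -
  assume t: "1 \<le> t"
  have "(\<Sum>i<n. x i (t + 1) \<omega>) = (\<Sum>i<n. \<Sum>j<n. w t i j *\<^sub>R (x j t \<omega> - \<alpha> t *\<^sub>R gt j t \<omega>))"
    using x_step t by simp
  also have "\<dots> = (\<Sum>j<n. \<Sum>i<n. w t i j *\<^sub>R (x j t \<omega> - \<alpha> t *\<^sub>R gt j t \<omega>))"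
    by (rule sum.swap)
  also have "\<dots> = (\<Sum>j<n. x j t \<omega> - \<alpha> t *\<^sub>R gt j t \<omega>)"
    by (simp add: scaleR_sum_left[symmetric] w_colsum)
  finally show ?thesis
    by (simp add: xbar_def gbar_def sum_subtractf scaleR_sum_right[symmetric] scaleR_right_diff_distrib)
qed

lemma xbar_unroll:
  "1 \<le> t \<Longrightarrow> xbar (t + 1) \<omega> =
    (1 / real n) *\<^sub>R ((\<Sum>j<n. first_step j \<omega>) - (\<Sum>s\<in>{2..t}. \<alpha> s *\<^sub>R (\<Sum>j<n. gt j s \<omega>)))"
proof (induction t rule: nat_induct_at_least)
  case base
  then show ?case
    using xbar_step[of 1 \<omega>]
    by (simp add: xbar_def gbar_def first_step_def sum_subtractf scaleR_sum_right[symmetric]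
        scaleR_right_diff_distrib)
next
  case (Suc t)
  have "{2..Suc t} = insert (Suc t) {2..t}"
    using Suc by auto
  then have "(1 / real n) *\<^sub>R ((\<Sum>j<n. first_step j \<omega>) - (\<Sum>s\<in>{2..t}. \<alpha> s *\<^sub>R (\<Sum>j<n. gt j s \<omega>)))
        - \<alpha> (t + 1) *\<^sub>R gbar (t + 1) \<omega>
      = (1 / real n) *\<^sub>R ((\<Sum>j<n. first_step j \<omega>) - (\<Sum>s\<in>{2..Suc t}. \<alpha> s *\<^sub>R (\<Sum>j<n. gt j s \<omega>)))"
    by (simp add: gbar_def scaleR_right_diff_distrib scaleR_right_distrib algebra_simps)
  then show ?case
    using xbar_step[of "t + 1" \<omega>] Suc by simp
qed

lemma x_unroll:
  "1 \<le> t \<Longrightarrow> i < n \<Longrightarrow> x i (t + 1) \<omega> = (\<Sum>j<n. PhiW n w (t + 1) 1 i j *\<^sub>R first_step j \<omega>)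
     - (\<Sum>s\<in>{2..t}. \<alpha> s *\<^sub>R (\<Sum>j<n. PhiW n w (t + 1) s i j *\<^sub>R gt j s \<omega>))"
  unfolding first_step_def by (rule push_sum_unroll[where X = "\<lambda>i t. x i t \<omega>"]) (use x_step in auto)

lemma y_unroll: "1 \<le> t \<Longrightarrow> i < n \<Longrightarrow> y i (t + 1) = (\<Sum>j<n. PhiW n w (t + 1) 1 i j)"
  using push_sum_unroll[of n y w "\<lambda>_. 0" "\<lambda>_ _. 0"] y_step y_1 by simp

lemma norm_z_sub_xbar_le:
  assumes t: "1 \<le> t" and i: "i < n"
  shows "norm (z i (t + 1) \<omega> - xbar (t + 1) \<omega>) \<le> (1 / \<eta>) * (8 * \<mu> ^ (t - 1) * (\<Sum>j<n. norm (first_step j \<omega>))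
           + (\<Sum>s\<in>{2..t}. 8 * \<mu> ^ (t - s) * \<alpha> s * (\<Sum>j<n. norm (gt j s \<omega>))))"
proof -
  obtain \<phi> :: "nat \<Rightarrow> nat \<Rightarrow> real" where \<phi>: "\<And>s j. 1 \<le> s \<Longrightarrow> s \<le> t \<Longrightarrow> j < n \<Longrightarrow>
      \<bar>PhiW n w (t + 1) s i j - \<phi> t i\<bar> \<le> 4 * \<mu> ^ (t - s)"
    using \<mu>_mixing i by blast
  define Y where "Y = y i (t + 1)"
  have Y: "\<eta> \<le> Y" "0 < Y"
    using \<eta>_bound[OF i, of "t + 1"] \<eta>_pos by (auto simp: Y_def)
  have "z i (t + 1) \<omega> - xbar (t + 1) \<omega> = (1 / Y) *\<^sub>R (x i (t + 1) \<omega> - Y *\<^sub>R xbar (t + 1) \<omega>)"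
    using Y by (simp add: z_def Y_def scaleR_right_diff_distrib)
  then have "norm (z i (t + 1) \<omega> - xbar (t + 1) \<omega>) = norm (x i (t + 1) \<omega> - Y *\<^sub>R xbar (t + 1) \<omega>) / Y"
    using Y by simp
  also have "\<dots> \<le> norm (x i (t + 1) \<omega> - Y *\<^sub>R xbar (t + 1) \<omega>) / \<eta>"
    using Y \<eta>_pos by (intro divide_left_mono) auto
  also have "\<dots> \<le> (8 * \<mu> ^ (t - 1) * (\<Sum>j<n. norm (first_step j \<omega>))
           + (\<Sum>s\<in>{2..t}. 8 * \<mu> ^ (t - s) * \<alpha> s * (\<Sum>j<n. norm (gt j s \<omega>)))) / \<eta>"
    unfolding x_unroll[OF t i] xbar_unroll[OF t] Y_def y_unroll[OF t i]
    using \<eta>_pos \<mu>_range \<alpha>_nonneg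
    by (intro divide_right_mono mixing_consensus_bound[OF n_pos t, of _ "\<phi> t i"] \<phi>) auto
  finally show ?thesis
    by simp
qed

lemma AE_norm_grad_xbar_le: "1 \<le> t \<Longrightarrow> AE \<omega> in M. \<forall>i\<in>{..<n}. norm (grad i (xbar t \<omega>)) \<le> G"
  unfolding xbar_def by (rule eventually_ball_finite) (use G_grad_avg in auto)

lemma AE_norm_grad_z_le: "1 \<le> t \<Longrightarrow> AE \<omega> in M. \<forall>i\<in>{..<n}. norm (grad i (z i t \<omega>)) \<le> G"
  by (rule eventually_ball_finite) (use G_grad_z in auto)

lemma AE_norm_xbar_sub_zstar_le: "1 \<le> t \<Longrightarrow> AE \<omega> in M. norm (xbar t \<omega> - zstar) \<le> G / lambar"
  using AE_norm_grad_xbar_le by (rule eventually_mono) (auto intro: dist_zstar_le)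

lemma sq_err_integrable: "1 \<le> t \<Longrightarrow> integrable M (\<lambda>\<omega>. (norm (xbar t \<omega> - zstar))\<^sup>2)"
proof (rule integrable_const_bound[where B = "(G / lambar)\<^sup>2"])
  assume t: "1 \<le> t"
  show "AE \<omega> in M. norm ((norm (xbar t \<omega> - zstar))\<^sup>2) \<le> (G / lambar)\<^sup>2"
    using AE_norm_xbar_sub_zstar_le[OF t] by eventually_elim (simp add: power_mono)
  show "(\<lambda>\<omega>. (norm (xbar t \<omega> - zstar))\<^sup>2) \<in> borel_measurable M"
    using xbar_borel[OF t] by measurable
qed

lemma err_le: "1 \<le> t \<Longrightarrow> err t \<le> (G / lambar)\<^sup>2"
proof -
  assume t: "1 \<le> t"
  have "err t \<le> integral\<^sup>L M (\<lambda>\<omega>. (G / lambar)\<^sup>2)"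
    unfolding err_def using sq_err_integrable[OF t] AE_norm_xbar_sub_zstar_le[OF t]
    by (intro integral_mono_AE) (auto elim!: eventually_mono simp: power_mono)
  then show ?thesis
    by (simp add: prob_space)
qed

lemma noise_borel: "i < n \<Longrightarrow> 1 \<le> t \<Longrightarrow> (\<lambda>\<omega>. N i t \<omega> (z i t \<omega>)) \<in> borel_measurable M"
proof -
  assume a: "i < n" "1 \<le> t"
  have [measurable]: "gt i t \<in> borel_measurable M" "z i t \<in> borel_measurable M"
    "grad i \<in> borel_measurable borel"
    using gt_meas z_borel grad_borel a by auto
  have "(\<lambda>\<omega>. gt i t \<omega> - grad i (z i t \<omega>)) \<in> borel_measurable M"
    by measurable
  then show ?thesis
    using gt_def[OF a] by simp
qed

lemma noise_inner_integrable:
  "j < n \<Longrightarrow> 1 \<le> t \<Longrightarrow> integrable M (\<lambda>\<omega>. N j t \<omega> (z j t \<omega>) \<bullet> (xbar t \<omega> - zstar))"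
proof (rule integrable_const_bound[where B = "c j * (G / lambar)"])
  assume j: "j < n" and t: "1 \<le> t"
  show "AE \<omega> in M. norm (N j t \<omega> (z j t \<omega>) \<bullet> (xbar t \<omega> - zstar)) \<le> c j * (G / lambar)"
    using N_bdd[OF j t] AE_norm_xbar_sub_zstar_le[OF t]
  proof eventually_elim
    case (elim \<omega>)
    have "norm (N j t \<omega> (z j t \<omega>) \<bullet> (xbar t \<omega> - zstar))
        \<le> norm (N j t \<omega> (z j t \<omega>)) * norm (xbar t \<omega> - zstar)"
      using Cauchy_Schwarz_ineq2 by simp
    also have "\<dots> \<le> c j * (G / lambar)"
      using elim order_trans[OF norm_ge_zero elim(1)[rule_format]] by (intro mult_mono) auto
    finally show ?case .
  qed
  have [measurable]: "(\<lambda>\<omega>. N j t \<omega> (z j t \<omega>)) \<in> borel_measurable M" "xbar t \<in> borel_measurable M"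
    using noise_borel[OF j t] xbar_borel[OF t] by auto
  show "(\<lambda>\<omega>. N j t \<omega> (z j t \<omega>) \<bullet> (xbar t \<omega> - zstar)) \<in> borel_measurable M"
    by measurable
qed

text \<open>The noise has zero mean given the history, of which \<open>xbar t\<close> is a function.\<close>
lemma integral_noise_inner_eq_0:
  assumes i: "i < n" and t: "1 \<le> t"
  shows "integral\<^sup>L M (\<lambda>\<omega>. N i t \<omega> (z i t \<omega>) \<bullet> (xbar t \<omega> - zstar)) = 0"
proof -
  define Xs where "Xs = {x i s | i s. i < n \<and> 1 \<le> s \<and> s \<le> t} \<union> {gt i s | i s. i < n \<and> 1 \<le> s \<and> s < t}"
  have sets_hist: "sets (gen_measure M Xs) = hist M n x gt t"
    by (simp add: sets_gen_measure hist_def Xs_def)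
  have sub: "subalgebra M (gen_measure M Xs)"
    using x_borel gt_meas by (intro subalgebra_gen_measure) (auto simp: Xs_def)
  have [measurable]: "x k t \<in> borel_measurable (gen_measure M Xs)" if "k \<in> {..<n}" for k
    using that t by (intro measurable_gen_measure) (auto simp: Xs_def)
  show ?thesis
  proof (rule integral_inner_eq_0_if_set_integrals_0[OF prob sub])
    show "(\<lambda>\<omega>. xbar t \<omega> - zstar) \<in> borel_measurable (gen_measure M Xs)"
      unfolding xbar_def by measurable
  qed (use noise_borel[OF i t] N_bdd[OF i t] AE_norm_xbar_sub_zstar_le[OF t] N_zero_mean[OF i t] sets_hist
      in \<open>auto elim: eventually_mono\<close>)
qed

lemma sq_err_step_pointwise:
  assumes t: "1 \<le> t"
    and grad_z: "\<forall>j\<in>{..<n}. norm (grad j (z j t \<omega>)) \<le> G"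
    and grad_xbar: "\<forall>i\<in>{..<n}. norm (grad i (xbar t \<omega>)) \<le> G"
  shows "(norm (xbar (t + 1) \<omega> - zstar))\<^sup>2 \<le> (1 - \<alpha> t * lambar) * (norm (xbar t \<omega> - zstar))\<^sup>2
      + (4 * \<alpha> t * G / real n) * (\<Sum>j<n. norm (z j t \<omega> - xbar t \<omega>))
      - (2 * \<alpha> t / real n) * (\<Sum>j<n. N j t \<omega> (z j t \<omega>) \<bullet> (xbar t \<omega> - zstar))
      + ((\<alpha> t)\<^sup>2 / real n) * (\<Sum>j<n. (norm (gt j t \<omega>))\<^sup>2)"
proof -
  define d where "d = xbar t \<omega> - zstar"
  define a where "a = \<alpha> t"
  define S1 where "S1 = (\<Sum>j<n. grad j (z j t \<omega>) \<bullet> d)"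
  define S2 where "S2 = (\<Sum>j<n. N j t \<omega> (z j t \<omega>) \<bullet> d)"
  define S3 where "S3 = (\<Sum>j<n. norm (z j t \<omega> - xbar t \<omega>))"
  define S4 where "S4 = (\<Sum>j<n. (norm (gt j t \<omega>))\<^sup>2)"
  have a: "0 \<le> a" and n: "0 < real n"
    using \<alpha>_nonneg[OF t] n_pos by (simp_all add: a_def)
  have "gbar t \<omega> \<bullet> d = (\<Sum>j<n. grad j (z j t \<omega>) \<bullet> d + N j t \<omega> (z j t \<omega>) \<bullet> d) / real n"
    using gt_def t by (simp add: gbar_def inner_sum_left inner_add_left)
  then have inner: "gbar t \<omega> \<bullet> d = (S1 + S2) / real n"
    by (simp add: S1_def S2_def sum.distrib)
  have S1: "S1 \<ge> real n * lambar / 2 * (norm d)\<^sup>2 - 2 * G * S3"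
    unfolding S1_def S3_def d_def by (rule sum_grad_inner_ge) (use grad_z grad_xbar in auto)
  have S4: "(norm (gbar t \<omega>))\<^sup>2 \<le> S4 / real n"
    unfolding gbar_def S4_def by (rule norm_mean_sq_le[OF n_pos])
  have "(norm (xbar (t + 1) \<omega> - zstar))\<^sup>2 = (norm d)\<^sup>2 - 2 * a * (gbar t \<omega> \<bullet> d) + a\<^sup>2 * (norm (gbar t \<omega>))\<^sup>2"
    unfolding xbar_step[OF t] d_def a_def power2_norm_eq_inner
    by (simp add: inner_diff_left inner_diff_right inner_commute power2_eq_square algebra_simps)
  also have "\<dots> \<le> (norm d)\<^sup>2 - 2 * a * ((real n * lambar / 2 * (norm d)\<^sup>2 - 2 * G * S3 + S2) / real n)
      + a\<^sup>2 * (S4 / real n)"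
    unfolding inner using S1 S4 a n
    by (intro add_mono diff_mono mult_left_mono divide_right_mono order_refl) auto
  also have "\<dots> = (1 - a * lambar) * (norm d)\<^sup>2 + (4 * a * G / real n) * S3 - (2 * a / real n) * S2
      + (a\<^sup>2 / real n) * S4"
    using n by (simp add: field_simps)
  finally show ?thesis
    unfolding a_def S2_def S3_def S4_def d_def .
qed

lemma err_step:
  assumes t: "1 \<le> t"
  shows "err (t + 1) \<le> (1 - \<alpha> t * lambar) * err t
      + (4 * \<alpha> t * G / real n) * (\<Sum>j<n. integral\<^sup>L M (\<lambda>\<omega>. norm (z j t \<omega> - xbar t \<omega>)))
      + (\<alpha> t)\<^sup>2 * G\<^sup>2"
proof -
  define T1 where "T1 = (\<lambda>\<omega>. (1 - \<alpha> t * lambar) * (norm (xbar t \<omega> - zstar))\<^sup>2)"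
  define T2 where "T2 = (\<lambda>\<omega>. (4 * \<alpha> t * G / real n) * (\<Sum>j<n. norm (z j t \<omega> - xbar t \<omega>)))"
  define T3 where "T3 = (\<lambda>\<omega>. (2 * \<alpha> t / real n) * (\<Sum>j<n. N j t \<omega> (z j t \<omega>) \<bullet> (xbar t \<omega> - zstar)))"
  define T4 where "T4 = (\<lambda>\<omega>. ((\<alpha> t)\<^sup>2 / real n) * (\<Sum>j<n. (norm (gt j t \<omega>))\<^sup>2))"
  have dist_int: "integrable M (\<lambda>\<omega>. norm (z j t \<omega> - xbar t \<omega>))" if "j < n" for j
    using z_integrable[OF that t] xbar_integrable[OF t] by auto
  have int: "integrable M T1" "integrable M T2" "integrable M T3" "integrable M T4"
    unfolding T1_def T2_def T3_def T4_def
    using sq_err_integrable[OF t] dist_int noise_inner_integrable[OF _ t] G_sq[OF _ t]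
    by (auto intro!: integrable_mult_right Bochner_Integration.integrable_sum)
  have AE_step: "AE \<omega> in M. (norm (xbar (t + 1) \<omega> - zstar))\<^sup>2 \<le> T1 \<omega> + T2 \<omega> - T3 \<omega> + T4 \<omega>"
    using AE_norm_grad_z_le[OF t] AE_norm_grad_xbar_le[OF t]
    by eventually_elim (unfold T1_def T2_def T3_def T4_def, rule sq_err_step_pointwise[OF t])
  have "err (t + 1) \<le> integral\<^sup>L M (\<lambda>\<omega>. T1 \<omega> + T2 \<omega> - T3 \<omega> + T4 \<omega>)"
    unfolding err_def using sq_err_integrable[of "t + 1"] int AE_step by (intro integral_mono_AE) auto
  also have "\<dots> = integral\<^sup>L M T1 + integral\<^sup>L M T2 - integral\<^sup>L M T3 + integral\<^sup>L M T4"
    using int by simp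
  finally have "err (t + 1) \<le> integral\<^sup>L M T1 + integral\<^sup>L M T2 - integral\<^sup>L M T3 + integral\<^sup>L M T4" .
  moreover have "integral\<^sup>L M T1 = (1 - \<alpha> t * lambar) * err t"
    by (simp add: T1_def err_def)
  moreover have "integral\<^sup>L M T2
      = (4 * \<alpha> t * G / real n) * (\<Sum>j<n. integral\<^sup>L M (\<lambda>\<omega>. norm (z j t \<omega> - xbar t \<omega>)))"
    using dist_int by (simp add: T2_def Bochner_Integration.integral_sum)
  moreover have "integral\<^sup>L M T3 = 0"
    using noise_inner_integrable[OF _ t] integral_noise_inner_eq_0[OF _ t]
    by (simp add: T3_def Bochner_Integration.integral_sum)
  moreover have "integral\<^sup>L M T4 = ((\<alpha> t)\<^sup>2 / real n) * (\<Sum>j<n. integral\<^sup>L M (\<lambda>\<omega>. (norm (gt j t \<omega>))\<^sup>2))"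
    unfolding T4_def using G_sq[OF _ t] by (simp add: Bochner_Integration.integral_sum)
  moreover have "\<dots> \<le> ((\<alpha> t)\<^sup>2 / real n) * (\<Sum>j<n. G\<^sup>2)"
    using G_sq[OF _ t] by (intro mult_left_mono sum_mono) auto
  ultimately show ?thesis
    using n_pos by simp
qed

definition K1 :: real where
  "K1 = integral\<^sup>L M (\<lambda>\<omega>. \<Sum>k<n. norm (first_step k \<omega>))"

definition err_const :: real where
  "err_const = 4 + 128 * K1 * decay_const \<mu> * lambar / (G * \<eta> * \<mu>\<^sup>2)
                 + 512 * real n * (decay_const \<mu> + 1) / (\<eta> * (1 - \<mu>) * \<mu>)"

lemma first_step_norm_integrable: "k < n \<Longrightarrow> integrable M (\<lambda>\<omega>. norm (first_step k \<omega>))"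
  unfolding first_step_def using x_integrable gt_integrable by auto

lemma K1_nonneg: "0 \<le> K1"
  unfolding K1_def by (intro integral_nonneg_AE AE_I2 sum_nonneg) auto

lemma sum_norm_gt_integrable: "1 \<le> s \<Longrightarrow> integrable M (\<lambda>\<omega>. \<Sum>j<n. norm (gt j s \<omega>))"
  using gt_norm_integrable by auto

lemma integral_sum_norm_gt_le:
  assumes "1 \<le> s"
  shows "integral\<^sup>L M (\<lambda>\<omega>. \<Sum>j<n. norm (gt j s \<omega>)) \<le> real n * G"
proof -
  have "integral\<^sup>L M (\<lambda>\<omega>. \<Sum>j<n. norm (gt j s \<omega>)) = (\<Sum>j<n. integral\<^sup>L M (\<lambda>\<omega>. norm (gt j s \<omega>)))"
    using gt_norm_integrable assms by (simp add: Bochner_Integration.integral_sum)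
  also have "\<dots> \<le> (\<Sum>j<n. G)"
    using integral_norm_gt_le assms by (intro sum_mono) auto
  finally show ?thesis
    by simp
qed

lemma integral_norm_z_sub_xbar_le:
  assumes t: "1 \<le> t" and i: "i < n"
  shows "integral\<^sup>L M (\<lambda>\<omega>. norm (z i (t + 1) \<omega> - xbar (t + 1) \<omega>))
    \<le> (1 / \<eta>) * (8 * \<mu> ^ (t - 1) * K1 + (\<Sum>s\<in>{2..t}. 8 * \<mu> ^ (t - s) * \<alpha> s * (real n * G)))"
proof -
  define R where "R = (\<lambda>\<omega>. (1 / \<eta>) * (8 * \<mu> ^ (t - 1) * (\<Sum>j<n. norm (first_step j \<omega>))
           + (\<Sum>s\<in>{2..t}. 8 * \<mu> ^ (t - s) * \<alpha> s * (\<Sum>j<n. norm (gt j s \<omega>)))))"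
  have R_int: "integrable M R"
    unfolding R_def
    by (intro integrable_mult_right Bochner_Integration.integrable_add Bochner_Integration.integrable_sum)
      (auto intro: first_step_norm_integrable gt_norm_integrable)
  have "integral\<^sup>L M (\<lambda>\<omega>. norm (z i (t + 1) \<omega> - xbar (t + 1) \<omega>)) \<le> integral\<^sup>L M R"
    using z_integrable[OF i, of "t + 1"] xbar_integrable[of "t + 1"] R_int norm_z_sub_xbar_le[OF t i]
    by (intro integral_mono) (auto simp: R_def)
  also have "integral\<^sup>L M R = (1 / \<eta>) * (8 * \<mu> ^ (t - 1) * K1
      + (\<Sum>s\<in>{2..t}. 8 * \<mu> ^ (t - s) * \<alpha> s * integral\<^sup>L M (\<lambda>\<omega>. \<Sum>j<n. norm (gt j s \<omega>))))"
  proof -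
    have "integrable M (\<lambda>\<omega>. 8 * \<mu> ^ (t - 1) * (\<Sum>j<n. norm (first_step j \<omega>)))"
      "integrable M (\<lambda>\<omega>. \<Sum>s\<in>{2..t}. 8 * \<mu> ^ (t - s) * \<alpha> s * (\<Sum>j<n. norm (gt j s \<omega>)))"
      using first_step_norm_integrable sum_norm_gt_integrable by auto
    then show ?thesis
      unfolding R_def K1_def using sum_norm_gt_integrable
      by (simp add: Bochner_Integration.integral_add Bochner_Integration.integral_sum)
  qed
  also have "\<dots> \<le> (1 / \<eta>) * (8 * \<mu> ^ (t - 1) * K1 + (\<Sum>s\<in>{2..t}. 8 * \<mu> ^ (t - s) * \<alpha> s * (real n * G)))"
    using \<eta>_pos \<mu>_range \<alpha>_nonneg integral_sum_norm_gt_le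
    by (intro mult_left_mono add_left_mono sum_mono) simp_all
  finally show ?thesis .
qed

lemma sum_integral_norm_z_sub_xbar_le:
  assumes t: "2 \<le> t"
  shows "(\<Sum>j<n. integral\<^sup>L M (\<lambda>\<omega>. norm (z j t \<omega> - xbar t \<omega>)))
    \<le> real n / \<eta> * (8 * \<mu> ^ (t - 2) * K1
        + 16 * real n * G / lambar * (\<Sum>r\<in>{2..<t}. \<mu> ^ (t - 1 - r) / real r))"
proof -
  have "(\<Sum>s\<in>{2..t - 1}. 8 * \<mu> ^ (t - 1 - s) * \<alpha> s * (real n * G))
      = 16 * real n * G / lambar * (\<Sum>r\<in>{2..<t}. \<mu> ^ (t - 1 - r) / real r)"
    unfolding sum_distrib_left using t \<alpha>_def lambar_pos
    by (intro sum.cong) (auto simp: field_simps)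
  then have "integral\<^sup>L M (\<lambda>\<omega>. norm (z j t \<omega> - xbar t \<omega>))
      \<le> 1 / \<eta> * (8 * \<mu> ^ (t - 2) * K1
        + 16 * real n * G / lambar * (\<Sum>r\<in>{2..<t}. \<mu> ^ (t - 1 - r) / real r))" if "j < n" for j
    using integral_norm_z_sub_xbar_le[of "t - 1" j] t that by (simp add: numeral_2_eq_2)
  then have "(\<Sum>j<n. integral\<^sup>L M (\<lambda>\<omega>. norm (z j t \<omega> - xbar t \<omega>)))
      \<le> (\<Sum>j<n. 1 / \<eta> * (8 * \<mu> ^ (t - 2) * K1
        + 16 * real n * G / lambar * (\<Sum>r\<in>{2..<t}. \<mu> ^ (t - 1 - r) / real r)))"
    by (intro sum_mono) auto
  then show ?thesis
    by simp
qed

lemma consensus_terms_le: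
  assumes t: "2 \<le> t"
  shows "4 * (G / lambar)\<^sup>2 + 64 * G * K1 / (lambar * \<eta>) * (real t * \<mu> ^ (t - 2))
      + 128 * real n * G\<^sup>2 / (lambar\<^sup>2 * \<eta>) * (real t * (\<Sum>r\<in>{2..<t}. \<mu> ^ (t - 1 - r) / real r))
      \<le> 4 * err_const * (G / lambar)\<^sup>2"
proof -
  define K2 where "K2 = decay_const \<mu>"
  define A where "A = (G / lambar)\<^sup>2"
  define a where "a = 64 * G * K1 / (lambar * \<eta>) * (K2 / \<mu>\<^sup>2)"
  define b where "b = 128 * real n * G\<^sup>2 / (lambar\<^sup>2 * \<eta>) * (4 * (K2 + 1) / (1 - \<mu>))"
  have \<mu>: "0 < \<mu>" "\<mu> < 1" "0 \<le> K2"
    using \<mu>_range decay_const_nonneg by (auto simp: K2_def)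
  have "\<mu> ^ t = \<mu> ^ (t - 2) * \<mu>\<^sup>2"
    using t by (metis le_add_diff_inverse2 power_add)
  then have "real t * \<mu> ^ (t - 2) * \<mu>\<^sup>2 \<le> K2"
    using mult_power_le_decay_const[OF \<mu>(1,2), of t] by (simp add: K2_def mult.assoc)
  then have "real t * \<mu> ^ (t - 2) \<le> K2 / \<mu>\<^sup>2"
    using \<mu> by (simp add: field_simps)
  moreover have "real t * (\<Sum>r\<in>{2..<t}. \<mu> ^ (t - 1 - r) / real r) \<le> 4 * (K2 + 1) / (1 - \<mu>)"
    using sum_power_div_le[OF \<mu>(1,2)] by (simp add: K2_def)
  ultimately have "4 * (G / lambar)\<^sup>2 + 64 * G * K1 / (lambar * \<eta>) * (real t * \<mu> ^ (t - 2))
      + 128 * real n * G\<^sup>2 / (lambar\<^sup>2 * \<eta>) * (real t * (\<Sum>r\<in>{2..<t}. \<mu> ^ (t - 1 - r) / real r))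
      \<le> 4 * A + a + b"
    unfolding A_def a_def b_def using G_pos K1_nonneg lambar_pos \<eta>_pos
    by (intro add_mono mult_left_mono) auto
  moreover have "4 * err_const * (G / lambar)\<^sup>2 = 16 * A + 8 * a + 4 * (b / \<mu>)"
    unfolding A_def a_def b_def using G_pos lambar_pos \<eta>_pos \<mu>
    by (simp add: err_const_def K2_def field_simps power2_eq_square)
  moreover have "0 \<le> A" "0 \<le> a" "0 \<le> b"
    using G_pos K1_nonneg lambar_pos \<eta>_pos \<mu> by (simp_all add: A_def a_def b_def)
  moreover have "b \<le> b / \<mu>"
    using \<open>0 \<le> b\<close> \<mu> mult_left_le[of \<mu> b] by (simp add: le_divide_eq)
  ultimately show ?thesis
    by linarith
qed

lemma err_recursion:
  assumes t: "2 \<le> t"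
  shows "err (t + 1) \<le> (1 - 2 / real t) * err t + 4 * err_const * (G / lambar)\<^sup>2 / (real t)\<^sup>2"
proof -
  define S where "S = (\<Sum>r\<in>{2..<t}. \<mu> ^ (t - 1 - r) / real r)"
  have \<alpha>: "\<alpha> t = 2 / (lambar * real t)"
    using \<alpha>_def t by simp
  have "0 \<le> 4 * \<alpha> t * G / real n"
    using \<alpha>_nonneg G_pos t by simp
  from mult_left_mono[OF sum_integral_norm_z_sub_xbar_le[OF t] this]
  have "err (t + 1) \<le> (1 - \<alpha> t * lambar) * err t
      + (4 * \<alpha> t * G / real n) * (real n / \<eta> * (8 * \<mu> ^ (t - 2) * K1 + 16 * real n * G / lambar * S))
      + (\<alpha> t)\<^sup>2 * G\<^sup>2"
    using err_step[of t] t unfolding S_def by linarith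
  also have "\<dots> = (1 - 2 / real t) * err t
      + (4 * (G / lambar)\<^sup>2 + 64 * G * K1 / (lambar * \<eta>) * (real t * \<mu> ^ (t - 2))
         + 128 * real n * G\<^sup>2 / (lambar\<^sup>2 * \<eta>) * (real t * S)) / (real t)\<^sup>2"
    using n_pos lambar_pos \<eta>_pos t by (simp add: \<alpha> field_simps power2_eq_square)
  also have "\<dots> \<le> (1 - 2 / real t) * err t + 4 * err_const * (G / lambar)\<^sup>2 / (real t)\<^sup>2"
    using consensus_terms_le[OF t] unfolding S_def by (intro add_left_mono divide_right_mono) auto
  finally show ?thesis .
qed

lemma err_le_div: "1 \<le> t \<Longrightarrow> err t \<le> 4 * err_const * G\<^sup>2 / (lambar\<^sup>2 * real t)"
proof -
  assume t: "1 \<le> t"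
  have "0 \<le> 128 * K1 * decay_const \<mu> * lambar / (G * \<eta> * \<mu>\<^sup>2)"
    "0 \<le> 512 * real n * (decay_const \<mu> + 1) / (\<eta> * (1 - \<mu>) * \<mu>)"
    using K1_nonneg G_pos \<eta>_pos lambar_pos \<mu>_range decay_const_nonneg[OF \<mu>_range] by simp_all
  then have "4 \<le> err_const"
    unfolding err_const_def by linarith
  define B where "B = 4 * err_const * (G / lambar)\<^sup>2"
  have "16 * (G / lambar)\<^sup>2 \<le> B"
    unfolding B_def using \<open>4 \<le> err_const\<close> by (intro mult_right_mono) auto
  moreover have "0 \<le> (G / lambar)\<^sup>2" "err 1 \<le> (G / lambar)\<^sup>2" "err 2 \<le> (G / lambar)\<^sup>2"
    using err_le[of 1] err_le[of 2] by auto
  ultimately have "0 \<le> B" "err 1 \<le> B" "2 * err 2 \<le> B"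
    by linarith+
  moreover have "err (t + 1) \<le> (1 - 2 / real t) * err t + B / (real t)\<^sup>2" if "2 \<le> t" for t
    unfolding B_def using that by (rule err_recursion)
  ultimately have "err t \<le> B / real t"
    using t by (intro recursion_le_div[where e = err])
  then show ?thesis
    by (simp add: B_def field_simps)
qed

lemma nn_integral_sq_err_le:
  assumes "1 \<le> t"
  shows "(\<integral>\<^sup>+ \<omega>. ennreal ((norm (xbar t \<omega> - zstar))\<^sup>2) \<partial>M)
           \<le> ennreal (4 * err_const * G\<^sup>2 / (lambar\<^sup>2 * real t))"
  using nn_integral_eq_integral[OF sq_err_integrable[OF assms]] err_le_div[OF assms]
  by (simp add: err_def ennreal_leI)

end

theorem proposition3:
  fixes M :: "'a measure"
    and n L :: nat and \<beta> :: real
    and E :: "nat \<Rightarrow> (nat \<times> nat) set"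
    and w :: "nat \<Rightarrow> nat \<Rightarrow> nat \<Rightarrow> real"
    and f :: "nat \<Rightarrow> 'v::euclidean_space \<Rightarrow> real"
    and grad :: "nat \<Rightarrow> 'v \<Rightarrow> 'v"
    and lam gam c :: "nat \<Rightarrow> real"
    and zstar :: 'v
    and x :: "nat \<Rightarrow> nat \<Rightarrow> 'a \<Rightarrow> 'v"
    and y :: "nat \<Rightarrow> nat \<Rightarrow> real"
    and gt :: "nat \<Rightarrow> nat \<Rightarrow> 'a \<Rightarrow> 'v"
    and N :: "nat \<Rightarrow> nat \<Rightarrow> 'a \<Rightarrow> 'v \<Rightarrow> 'v"
    and \<alpha> :: "nat \<Rightarrow> real"
    and G \<eta> \<mu> :: real
  defines "lambar \<equiv> (\<Sum>i<n. lam i) / real n"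
  defines "z \<equiv> (\<lambda>i t \<omega>. (1 / y i t) *\<^sub>R x i t \<omega>)"
  defines "K1 \<equiv> integral\<^sup>L M (\<lambda>\<omega>. \<Sum>k<n. norm (x k 1 \<omega> - \<alpha> 1 *\<^sub>R gt k 1 \<omega>))"
  defines "K2 \<equiv> - (\<mu> powr (- 1 / ln \<mu>)) / ln \<mu>"
  defines "C \<equiv> 4 + 128 * K1 * K2 * lambar / (G * \<eta> * \<mu>\<^sup>2)
                 + 512 * real n * (K2 + 1) / (\<eta> * (1 - \<mu>) * \<mu>)"
  assumes prob: "prob_space M"
    and n_pos: "0 < n"
    (* graphs: self-arcs, uniform strong connectivity by sub-sequences of length L *)
    and L_pos: "0 < L"
    and E_sub: "\<And>t. E t \<subseteq> {..<n} \<times> {..<n}"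
    and E_self: "\<And>t i. i < n \<Longrightarrow> (i, i) \<in> E t"
    and E_conn: "\<And>t i j. 1 \<le> t \<Longrightarrow> i < n \<Longrightarrow> j < n \<Longrightarrow>
                   (i, j) \<in> (\<Union>k\<in>{t..t + L - 1}. E k)\<^sup>*"
    (* weights *)
    and \<beta>_pos: "0 < \<beta>"
    and w_pos: "\<And>t i j. i < n \<Longrightarrow> j < n \<Longrightarrow> (j, i) \<in> E t \<Longrightarrow> \<beta> \<le> w t i j"
    and w_zero: "\<And>t i j. i < n \<Longrightarrow> j < n \<Longrightarrow> (j, i) \<notin> E t \<Longrightarrow> w t i j = 0"
    and w_col: "\<And>t i. i < n \<Longrightarrow> (\<Sum>k\<in>{k. k < n \<and> (i, k) \<in> E t}. w t k i) = 1"
    (* local functions *)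
    and f_grad: "\<And>i v. i < n \<Longrightarrow> (f i has_derivative (\<lambda>h. grad i v \<bullet> h)) (at v)"
    and lam_pos: "\<And>i. i < n \<Longrightarrow> 0 < lam i"
    and f_sconv: "\<And>i u v. i < n \<Longrightarrow>
                   f i u - f i v \<ge> grad i v \<bullet> (u - v) + lam i / 2 * (norm (u - v))\<^sup>2"
    and f_smooth: "\<And>i u v. i < n \<Longrightarrow> norm (grad i u - grad i v) \<le> gam i * norm (u - v)"
    and zstar_min: "\<And>v. v \<noteq> zstar \<Longrightarrow>
                   (\<Sum>i<n. f i zstar) / real n < (\<Sum>i<n. f i v) / real n"
    (* stepsize *)
    and \<alpha>_def: "\<And>t. 1 \<le> t \<Longrightarrow> \<alpha> t = 2 / (lambar * real t)"
    (* stochastic gradient-push *)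
    and x_meas: "\<And>i. i < n \<Longrightarrow> x i 1 \<in> borel_measurable M"
    and x1_int: "\<And>i. i < n \<Longrightarrow> integrable M (\<lambda>\<omega>. norm (x i 1 \<omega>))"
    and x_step: "\<And>i t \<omega>. i < n \<Longrightarrow> 1 \<le> t \<Longrightarrow>
                   x i (t + 1) \<omega> = (\<Sum>j<n. w t i j *\<^sub>R (x j t \<omega> - \<alpha> t *\<^sub>R gt j t \<omega>))"
    and y_1: "\<And>i. i < n \<Longrightarrow> y i 1 = 1"
    and y_step: "\<And>i t. i < n \<Longrightarrow> 1 \<le> t \<Longrightarrow> y i (t + 1) = (\<Sum>j<n. w t i j * y j t)"
    (* noisy gradients *)
    and gt_meas: "\<And>i t. i < n \<Longrightarrow> 1 \<le> t \<Longrightarrow> gt i t \<in> borel_measurable M"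
    and gt_def: "\<And>i t \<omega>. i < n \<Longrightarrow> 1 \<le> t \<Longrightarrow>
                   gt i t \<omega> = grad i (z i t \<omega>) + N i t \<omega> (z i t \<omega>)"
    and N_meas: "\<And>i t. i < n \<Longrightarrow> 1 \<le> t \<Longrightarrow>
                   N i t \<in> M \<rightarrow>\<^sub>M Pi\<^sub>M UNIV (\<lambda>_. borel)"
    and N_indep: "prob_space.indep_vars M (\<lambda>_. Pi\<^sub>M UNIV (\<lambda>_. borel))
                   (\<lambda>(i, t). N i t) ({..<n} \<times> {1..})"
    and N_zero_mean: "\<And>i t A. i < n \<Longrightarrow> 1 \<le> t \<Longrightarrow> A \<in> hist M n x gt t \<Longrightarrow>
                   (LINT \<omega>:A|M. N i t \<omega> (z i t \<omega>)) = 0"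
    and N_bdd: "\<And>i t. i < n \<Longrightarrow> 1 \<le> t \<Longrightarrow> AE \<omega> in M. \<forall>v. norm (N i t \<omega> v) \<le> c i"
    (* the constants G, eta, mu *)
    and G_pos: "0 < G"
    and G_sq: "\<And>i t. i < n \<Longrightarrow> 1 \<le> t \<Longrightarrow>
                   integrable M (\<lambda>\<omega>. (norm (gt i t \<omega>))\<^sup>2) \<and>
                   integral\<^sup>L M (\<lambda>\<omega>. (norm (gt i t \<omega>))\<^sup>2) \<le> G\<^sup>2"
    and G_grad_z: "\<And>i t. i < n \<Longrightarrow> 1 \<le> t \<Longrightarrow> AE \<omega> in M. norm (grad i (z i t \<omega>)) \<le> G"
    and G_grad_avg: "\<And>i t. i < n \<Longrightarrow> 1 \<le> t \<Longrightarrow>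
                   AE \<omega> in M. norm (grad i ((1 / real n) *\<^sub>R (\<Sum>k<n. x k t \<omega>))) \<le> G"
    and \<eta>_pos: "0 < \<eta>"
    and \<eta>_bound: "\<And>i t. i < n \<Longrightarrow> 1 \<le> t \<Longrightarrow> \<eta> \<le> y i t"
    and \<mu>_range: "0 < \<mu>" "\<mu> < 1"
    and \<mu>_mixing: "\<exists>\<phi> :: nat \<Rightarrow> nat \<Rightarrow> real. \<forall>t. stoch_vec n (\<phi> t) \<and>
                   (\<forall>s i j. 1 \<le> s \<longrightarrow> s \<le> t \<longrightarrow> i < n \<longrightarrow> j < n \<longrightarrow>
                      \<bar>PhiW n w (t + 1) s i j - \<phi> t i\<bar> \<le> 4 * \<mu> ^ (t - s))"
  shows "\<And>t. 1 \<le> t \<Longrightarrow>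
           (\<integral>\<^sup>+ \<omega>. ennreal ((norm ((1 / real n) *\<^sub>R (\<Sum>i<n. x i t \<omega>) - zstar))\<^sup>2) \<partial>M)
             \<le> ennreal (4 * C * G\<^sup>2 / (lambar\<^sup>2 * real t))"
proof -
  have w_colsum: "(\<Sum>i<n. w t i j) = 1" if "j < n" for t j
  proof -
    have "(\<Sum>i<n. w t i j) = (\<Sum>k\<in>{k. k < n \<and> (j, k) \<in> E t}. w t k j)"
      by (rule sum.mono_neutral_right) (use w_zero that in auto)
    then show ?thesis
      using w_col[OF that] by simp
  qed
  interpret S: stochastic_gradient_push n f grad lam gam zstar lambar M w c x y gt N \<alpha> G \<eta> \<mu> z
    by (intro stochastic_gradient_push.intro strongly_convex_sum.intro
        stochastic_gradient_push_axioms.intro; (fact assms w_colsum)?)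
      (simp_all add: lambar_def z_def)
  have "S.K1 = K1"
    unfolding S.K1_def S.first_step_def K1_def ..
  then have "S.err_const = C"
    unfolding S.err_const_def C_def K2_def decay_const_def by simp
  then show "?thesis t" if "1 \<le> t" for t
    using S.nn_integral_sq_err_le[OF that] unfolding S.xbar_def by simp
qed

end
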